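(* For each $\pi\in\Pi$, the map $x\mapsto\mathscr{P}(\pi,x)$ on $\mathbb{S}^D$ is twice differentiable, and $\displaystyle\sup_{\pi\in\Pi,\ x\in\mathbb{S}^D,\ y\in\mathbb{S}^D,\ |y|\le1}\ \sum_{j=1}^2\Big|\frac{d^j}{dr^j}\mathscr{P}(\pi,x+ry)\Big|_{r=0}\Big|\le 3.$
   Context: Fix $D\in\mathbb{N}$. For real matrices (or vectors) of equal size, $a\cdot b=\sum_{i,j}a_{ij}b_{ij}$ and $|a|=\sqrt{a\cdot a}$. $\mathbb{S}^D$ is the space of real symmetric $D\times D$ matrices, $\mathbb{S}^D_+$ the positive semidefinite ones; $a\succeq b$ means $a\cdot c\ge b\cdot c$ for all $c\in\mathbb{S}^D_+$. $P_1$ is a probability measure supported in the closed unit ball of $\mathbb{R}^D$. $\xi:\mathbb{R}^{D\times D}\to\mathbb{R}$ satisfies: (i) $\xi$ is differentiable with locally Lipschitz gradient $\nabla\xi$; (ii) $\xi\ge0$ on $\mathbb{S}^D_+$, $\xi(0)=0$, $\xi(a)=\xi(a^\intercal)$; (iii) for $a,b\in\mathbb{S}^D_+$ with $a\succeq b$, $\xi(a)\ge\xi(b)$ and $\nabla\xi(a)\succeq\nabla\xi(b)$. $\Pi$ is the set of left-continuous maps $\pi:[0,1]\to\mathbb{S}^D_+$ with $\pi(s')\succeq\pi(s)$ for $s'\ge s$. Let $\mathfrak{R}$ be the Ruelle probability cascade with overlap uniform on $[0,1]$ (random probability measure on the unit sphere of a separable Hilbert space with inner product $\alpha\wedge\alpha'$,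 a.s. ultrametric support, $\alpha\wedge\alpha'$ uniform on $[0,1]$ under $\mathbb{E}\mathfrak{R}^{\otimes 2}$). For $\pi\in\Pi$, conditionally on $\mathfrak{R}$, $(w^\pi(\alpha))_{\alpha\in\mathrm{supp}\,\mathfrak{R}}$ is a centered $\mathbb{R}^D$-valued Gaussian process with $\mathbb{E}w^\pi(\alpha)w^\pi(\alpha')^\intercal=\pi(\alpha\wedge\alpha')$. With $\theta(a)=a\cdot\nabla\xi(a)-\xi(a)$, $\mathscr{P}(\pi,x)=\mathbb{E}\log\iint\exp\big(w^{\nabla\xi\circ\pi}(\alpha)\cdot\tau-\tfrac12\nabla\xi(\pi(1))\cdot\tau\tau^\intercal+x\cdot\tau\tau^\intercal\big)dP_1(\tau)d\mathfrak{R}(\alpha)+\tfrac12\int_0^1\theta(\pi(s))ds$ for $x\in\mathbb{S}^D$. *)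

theory Defs
  imports "HOL-Probability.Probability"
begin

type_synonym 'd mat = "real ^ 'd ^ 'd"

definition symm :: "'d::finite mat \<Rightarrow> bool" where
  "symm a \<longleftrightarrow> transpose a = a"

definition psd :: "'d::finite mat \<Rightarrow> bool" where
  "psd a \<longleftrightarrow> symm a \<and> (\<forall>v::real^'d. v \<bullet> (a *v v) \<ge> 0)"

definition loew_ge :: "'d::finite mat \<Rightarrow> 'd mat \<Rightarrow> bool" where
  "loew_ge a b \<longleftrightarrow> (\<forall>c. psd c \<longrightarrow> a \<bullet> c \<ge> b \<bullet> c)"

definition outer :: "real ^ 'd \<Rightarrow> real ^ 'd \<Rightarrow> 'd::finite mat" where
  "outer u v = (\<chi> i j. u $ i * v $ j)"

definition xi_assm :: "('d::finite mat \<Rightarrow> real) \<Rightarrow> ('d mat \<Rightarrow> 'd mat) \<Rightarrow> bool" where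
  "xi_assm \<xi> g \<longleftrightarrow>
     (\<forall>a. (\<xi> has_derivative (\<lambda>h. g a \<bullet> h)) (at a)) \<and>
     (\<forall>a. \<exists>e>0. \<exists>L. L-lipschitz_on (ball a e) g) \<and>
     (\<forall>a. psd a \<longrightarrow> \<xi> a \<ge> 0) \<and> \<xi> 0 = 0 \<and> (\<forall>a. \<xi> a = \<xi> (transpose a)) \<and>
     (\<forall>a b. psd a \<longrightarrow> psd b \<longrightarrow> loew_ge a b \<longrightarrow> \<xi> a \<ge> \<xi> b \<and> loew_ge (g a) (g b))"

definition theta :: "('d::finite mat \<Rightarrow> real) \<Rightarrow> ('d mat \<Rightarrow> 'd mat) \<Rightarrow> 'd mat \<Rightarrow> real" where
  "theta \<xi> g a = a \<bullet> g a - \<xi> a"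

definition Pi_paths :: "(real \<Rightarrow> 'd::finite mat) set" where
  "Pi_paths = {\<pi>. (\<forall>s\<in>{0..1}. psd (\<pi> s)) \<and>
                  (\<forall>s\<in>{0<..1}. (\<pi> \<longlongrightarrow> \<pi> s) (at_left s)) \<and>
                  (\<forall>s\<in>{0..1}. \<forall>s'\<in>{0..1}. s \<le> s' \<longrightarrow> loew_ge (\<pi> s') (\<pi> s))}"

definition msupp :: "'a::topological_space measure \<Rightarrow> 'a set" where
  "msupp \<mu> = {x. \<forall>U. open U \<longrightarrow> x \<in> U \<longrightarrow> emeasure \<mu> U > 0}"

text \<open>Ruelle probability cascade with overlap uniform on [0,1], described by its
  defining properties: a random probability measure (a measurable kernel from M)
  on the unit sphere of the separable Hilbert space 'h, a.s. ultrametric support,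
  and overlap uniform on [0,1] under E R^{\<otimes>2}.\<close>
definition is_RPC :: "'w measure \<Rightarrow> ('w \<Rightarrow> 'h::{real_inner,polish_space} measure) \<Rightarrow> bool" where
  "is_RPC M R \<longleftrightarrow> prob_space M \<and> R \<in> M \<rightarrow>\<^sub>M prob_algebra borel \<and>
     (\<forall>\<omega>\<in>space M. emeasure (R \<omega>) (sphere 0 1) = 1) \<and>
     (AE \<omega> in M. \<forall>a\<in>msupp (R \<omega>). \<forall>b\<in>msupp (R \<omega>). \<forall>c\<in>msupp (R \<omega>).
         a \<bullet> c \<ge> min (a \<bullet> b) (b \<bullet> c)) \<and>
     (\<forall>A\<in>sets (borel :: real measure).
        (\<integral>\<^sup>+\<omega>. emeasure (R \<omega> \<Otimes>\<^sub>M R \<omega>) {p\<in>space (R \<omega> \<Otimes>\<^sub>M R \<omega>). fst p \<bullet> snd p \<in> A} \<partial>M)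
          = emeasure lborel (A \<inter> {0..1}))"

definition centered_gaussian :: "'e measure \<Rightarrow> ('e \<Rightarrow> real) \<Rightarrow> real \<Rightarrow> bool" where
  "centered_gaussian N X v \<longleftrightarrow>
     (if v = 0 then X \<in> borel_measurable N \<and> (AE \<eta> in N. X \<eta> = 0)
      else v > 0 \<and> distributed N lborel X (normal_density 0 (sqrt v)))"

text \<open>Conditionally on R (realised as a second independent probability space N), w is a
  measurable centered R^D-valued Gaussian process on supp R with
  E w(a) w(a')^T = C (a . a').  Joint Gaussianity: every finite linear combination
  is centered Gaussian with the prescribed variance.\<close>
definition cond_gauss_proc ::
  "'w measure \<Rightarrow> 'e measure \<Rightarrow> ('w \<Rightarrow> 'h::{real_inner,polish_space} measure)
     \<Rightarrow> (real \<Rightarrow> 'd::finite mat) \<Rightarrow> ('w \<Rightarrow> 'e \<Rightarrow> 'h \<Rightarrow> real ^ 'd) \<Rightarrow> bool" where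
  "cond_gauss_proc M N R C w \<longleftrightarrow>
     (\<lambda>((\<omega>, \<eta>), a). w \<omega> \<eta> a) \<in> borel_measurable ((M \<Otimes>\<^sub>M N) \<Otimes>\<^sub>M borel) \<and>
     (AE \<omega> in M. \<forall>(n::nat) (as :: nat \<Rightarrow> 'h) (cs :: nat \<Rightarrow> real ^ 'd).
        (\<forall>i<n. as i \<in> msupp (R \<omega>)) \<longrightarrow>
        centered_gaussian N (\<lambda>\<eta>. \<Sum>i<n. cs i \<bullet> w \<omega> \<eta> (as i))
          (\<Sum>i<n. \<Sum>j<n. cs i \<bullet> (C (as i \<bullet> as j) *v cs j)))"

text \<open>The functional script-P(pi, x); here w is the process w^{\<nabla>\<xi>\<circ>\<pi>}.\<close>
definition Pfun ::
  "'w measure \<Rightarrow> 'e measure \<Rightarrow> ('w \<Rightarrow> 'h::{real_inner,polish_space} measure)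
     \<Rightarrow> ('w \<Rightarrow> 'e \<Rightarrow> 'h \<Rightarrow> real ^ 'd) \<Rightarrow> (real ^ 'd) measure
     \<Rightarrow> ('d::finite mat \<Rightarrow> real) \<Rightarrow> ('d mat \<Rightarrow> 'd mat) \<Rightarrow> (real \<Rightarrow> 'd mat) \<Rightarrow> 'd mat \<Rightarrow> real" where
  "Pfun M N R w P1 \<xi> g \<pi> x =
     (\<integral>\<omega>\<eta>. ln (\<integral>\<tau>a. exp (w (fst \<omega>\<eta>) (snd \<omega>\<eta>) (snd \<tau>a) \<bullet> fst \<tau>a
                     - 1/2 * (g (\<pi> 1) \<bullet> outer (fst \<tau>a) (fst \<tau>a))
                     + x \<bullet> outer (fst \<tau>a) (fst \<tau>a)) \<partial>(P1 \<Otimes>\<^sub>M R (fst \<omega>\<eta>))) \<partial>(M \<Otimes>\<^sub>M N))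
     + 1/2 * (\<integral>s. indicator {0..1} s * theta \<xi> g (\<pi> s) \<partial>lborel)"

definition twice_differentiable_on :: "('a::real_normed_vector \<Rightarrow> real) \<Rightarrow> 'a set \<Rightarrow> bool" where
  "twice_differentiable_on f S \<longleftrightarrow>
     (\<exists>f' :: 'a \<Rightarrow> ('a \<Rightarrow>\<^sub>L real).
        (\<forall>x\<in>S. (f has_derivative blinfun_apply (f' x)) (at x within S)) \<and>
        (\<forall>x\<in>S. f' differentiable (at x within S)))"

end

theory Submission
  imports Defs
begin

text \<open>
  For fixed disorder, \<open>x \<mapsto> ln \<integral> F exp (x \<bullet> \<tau>\<tau>\<^sup>T)\<close> is the log-Laplace transform of the matrix
  \<open>\<tau>\<tau>\<^sup>T\<close>, whose norm is at most 1, under a tilted measure. Its derivative in direction \<open>y\<close> is the Gibbs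
  mean of \<open>y \<bullet> \<tau>\<tau>\<^sup>T\<close>, bounded by \<open>|y|\<close>, and its second derivative is the corresponding Gibbs
  covariance, bounded by \<open>2|y|\<^sup>2\<close>. The bound \<open>|exp s - 1 - s| \<le> s\<^sup>2\<close> yields Taylor remainders
  that are uniform in the disorder, so they survive the outer expectation; this gives twice
  differentiability and the bound \<open>1 + 2 = 3\<close>.
\<close>

lemma abs_exp_minus_one_minus_le_sq:
  fixes s :: real
  assumes "\<bar>s\<bar> \<le> 1"
  shows "\<bar>exp s - 1 - s\<bar> \<le> s\<^sup>2"
proof -
  have "exp s \<le> 1 + s + s\<^sup>2"
  proof (cases "s \<ge> 0")
    case True
    then show ?thesis using exp_bound assms by simp
  next
    case False
    have "exp (- s) \<ge> 1 - s" using exp_ge_add_one_self[of "- s"] by simp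
    then have "exp s \<le> 1 / (1 - s)" using False by (simp add: exp_minus field_simps)
    also have "\<dots> \<le> 1 + s + s\<^sup>2"
      using False assms by (simp add: field_simps power2_eq_square mult_nonpos_nonneg)
    finally show ?thesis .
  qed
  then show ?thesis using exp_ge_add_one_self[of s] zero_le_power2[of s] unfolding abs_le_iff by linarith
qed

lemma abs_ln_minus_le_sq:
  fixes r e \<delta> :: real
  assumes "\<bar>e\<bar> \<le> \<delta>" "\<bar>r - 1 - e\<bar> \<le> \<delta>\<^sup>2" "\<delta> \<le> 1/4"
  shows "\<bar>ln r - e\<bar> \<le> 5 * \<delta>\<^sup>2"
proof -
  have "0 \<le> \<delta>" using assms(1) by linarith
  then have "\<delta> * \<delta> \<le> \<delta> * (1/4)" using assms(3) by (intro mult_left_mono)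
  then have "\<delta>\<^sup>2 \<le> \<delta> / 4" by (simp add: power2_eq_square)
  then have r1: "\<bar>r - 1\<bar> \<le> 5/4 * \<delta>" using assms(1,2) unfolding abs_le_iff by linarith
  then have "\<bar>ln (1 + (r - 1)) - (r - 1)\<bar> \<le> 2 * (r - 1)\<^sup>2"
    using assms by (intro abs_ln_one_plus_x_minus_x_bound) simp
  moreover have "(r - 1)\<^sup>2 \<le> (5/4 * \<delta>)\<^sup>2"
    using r1 by (metis abs_ge_zero power2_abs power_mono)
  moreover have "(5/4 * \<delta>)\<^sup>2 = 25/16 * \<delta>\<^sup>2" by (simp add: power2_eq_square)
  ultimately show ?thesis using assms(2) unfolding abs_le_iff by simp
qed

lemma abs_ratio_minus_le:
  fixes r a e\<^sub>s e\<^sub>t e\<^sub>s\<^sub>t \<delta> \<kappa> :: real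
  assumes es: "\<bar>e\<^sub>s\<bar> \<le> \<delta>" and et: "\<bar>e\<^sub>t\<bar> \<le> \<kappa>" and est: "\<bar>e\<^sub>s\<^sub>t\<bar> \<le> \<delta> * \<kappa>"
    and r: "\<bar>r - 1 - e\<^sub>s\<bar> \<le> \<delta>\<^sup>2" and a: "\<bar>a - e\<^sub>t - e\<^sub>s\<^sub>t\<bar> \<le> \<kappa> * \<delta>\<^sup>2" and \<delta>: "\<delta> \<le> 1/4"
  shows "\<bar>a / r - e\<^sub>t - (e\<^sub>s\<^sub>t - e\<^sub>s * e\<^sub>t)\<bar> \<le> 10 * \<delta>\<^sup>2 * \<kappa>"
proof -
  define Q where "Q = e\<^sub>t + e\<^sub>s\<^sub>t - e\<^sub>s * e\<^sub>t"
  have \<delta>0: "0 \<le> \<delta>" and \<kappa>0: "0 \<le> \<kappa>" using es et by linarith+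
  have "\<delta> * \<delta> \<le> \<delta> * (1/4)" using \<delta> \<delta>0 by (intro mult_left_mono)
  then have "\<delta>\<^sup>2 \<le> \<delta> / 4" by (simp add: power2_eq_square)
  then have r_ge: "r \<ge> 1/2" using es r \<delta> unfolding abs_le_iff by linarith
  have "\<bar>e\<^sub>s * e\<^sub>t\<bar> \<le> \<delta> * \<kappa>" using es et by (simp add: abs_mult mult_mono)
  moreover have "\<delta> * \<kappa> \<le> 1/4 * \<kappa>" using \<delta> \<kappa>0 by (intro mult_right_mono)
  ultimately have Q: "\<bar>Q\<bar> \<le> 3/2 * \<kappa>" using et est unfolding Q_def abs_le_iff by linarith
  have "a - r * Q = (a - e\<^sub>t - e\<^sub>s\<^sub>t) - e\<^sub>s * e\<^sub>s\<^sub>t + e\<^sub>s\<^sup>2 * e\<^sub>t - (r - 1 - e\<^sub>s) * Q"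
    unfolding Q_def by (simp add: algebra_simps power2_eq_square)
  moreover have "\<bar>e\<^sub>s * e\<^sub>s\<^sub>t\<bar> \<le> \<kappa> * \<delta>\<^sup>2"
    using mult_mono[OF es est] \<delta>0 by (simp add: abs_mult power2_eq_square mult_ac)
  moreover have "\<bar>e\<^sub>s\<^sup>2 * e\<^sub>t\<bar> \<le> \<kappa> * \<delta>\<^sup>2"
    using mult_mono[OF power_mono[OF es, of 2] et] \<delta>0 by (simp add: abs_mult power_abs mult_ac)
  moreover have "\<bar>(r - 1 - e\<^sub>s) * Q\<bar> \<le> 3/2 * (\<kappa> * \<delta>\<^sup>2)"
    using mult_mono[OF r Q] by (simp add: abs_mult mult_ac)
  ultimately have "\<bar>a - r * Q\<bar> \<le> 9/2 * (\<kappa> * \<delta>\<^sup>2)"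
    using a unfolding abs_le_iff by (intro conjI) linarith+
  moreover have K: "0 \<le> \<kappa> * \<delta>\<^sup>2" using \<kappa>0 by simp
  moreover have "\<bar>a / r - Q\<bar> = \<bar>a - r * Q\<bar> / r" using r_ge by (simp add: field_simps abs_div)
  ultimately have "\<bar>a / r - Q\<bar> \<le> 9/2 * (\<kappa> * \<delta>\<^sup>2) / (1/2)"
    using r_ge by (simp only:) (rule frac_le; simp)
  with K show ?thesis unfolding Q_def by (simp add: mult_ac)
qed

definition weighted_mean :: "'a measure \<Rightarrow> ('a \<Rightarrow> real) \<Rightarrow> ('a \<Rightarrow> real) \<Rightarrow> real" where
  "weighted_mean \<mu> \<psi> f = (\<integral>u. \<psi> u * f u \<partial>\<mu>) / (\<integral>u. \<psi> u \<partial>\<mu>)"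

locale weighted_prob_space = prob_space \<mu> for \<mu> :: "'a measure" +
  fixes \<psi> :: "'a \<Rightarrow> real"
  assumes integrable_weight: "integrable \<mu> \<psi>" and weight_pos: "\<And>u. 0 < \<psi> u"
begin

lemma total_weight_pos: "0 < (\<integral>u. \<psi> u \<partial>\<mu>)"
proof -
  have "AE u in \<mu>. 0 \<le> \<psi> u" using weight_pos by (simp add: less_imp_le)
  moreover have "\<not> (AE u in \<mu>. \<psi> u = 0)"
  proof
    assume "AE u in \<mu>. \<psi> u = 0"
    then have "AE u in \<mu>. False" by eventually_elim (simp add: less_imp_neq[OF weight_pos, symmetric])
    then show False by simp
  qed
  ultimately show ?thesis
    using integral_nonneg_eq_0_iff_AE[OF integrable_weight] integral_nonneg_AE[of \<psi> \<mu>]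
    by (simp add: order_less_le)
qed

lemma integrable_weight_mult:
  assumes "f \<in> borel_measurable \<mu>" "AE u in \<mu>. \<bar>f u\<bar> \<le> B"
  shows "integrable \<mu> (\<lambda>u. \<psi> u * f u)"
proof (rule Bochner_Integration.integrable_bound[where f="\<lambda>u. \<bar>B\<bar> * \<psi> u"])
  show "integrable \<mu> (\<lambda>u. \<bar>B\<bar> * \<psi> u)" using integrable_weight by simp
  show "(\<lambda>u. \<psi> u * f u) \<in> borel_measurable \<mu>"
    using integrable_weight assms(1) by measurable
  show "AE u in \<mu>. norm (\<psi> u * f u) \<le> norm (\<bar>B\<bar> * \<psi> u)"
    using assms(2) by eventually_elim
      (simp add: abs_mult abs_of_pos[OF weight_pos] mult.commute mult_left_mono weight_pos less_imp_le)
qed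

lemma weighted_mean_bounds:
  assumes f: "f \<in> borel_measurable \<mu>" and ab: "AE u in \<mu>. a \<le> f u \<and> f u \<le> b"
  shows "a \<le> weighted_mean \<mu> \<psi> f" "weighted_mean \<mu> \<psi> f \<le> b"
proof -
  have "AE u in \<mu>. \<bar>f u\<bar> \<le> max \<bar>a\<bar> \<bar>b\<bar>" using ab by eventually_elim auto
  then have int: "integrable \<mu> (\<lambda>u. \<psi> u * f u)" by (rule integrable_weight_mult[OF f])
  have "(\<integral>u. a * \<psi> u \<partial>\<mu>) \<le> (\<integral>u. \<psi> u * f u \<partial>\<mu>)"
  proof (rule integral_mono_AE[OF _ int])
    show "AE u in \<mu>. a * \<psi> u \<le> \<psi> u * f u"
      using ab by eventually_elim (metis less_imp_le mult.commute mult_left_mono weight_pos)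
  qed (simp add: integrable_weight)
  moreover have "(\<integral>u. \<psi> u * f u \<partial>\<mu>) \<le> (\<integral>u. b * \<psi> u \<partial>\<mu>)"
  proof (rule integral_mono_AE[OF int])
    show "AE u in \<mu>. \<psi> u * f u \<le> b * \<psi> u"
      using ab by eventually_elim (metis less_imp_le mult.commute mult_left_mono weight_pos)
  qed (simp add: integrable_weight)
  ultimately show "a \<le> weighted_mean \<mu> \<psi> f" "weighted_mean \<mu> \<psi> f \<le> b"
    using total_weight_pos by (simp_all add: weighted_mean_def field_simps)
qed

lemma abs_weighted_mean_le:
  assumes "f \<in> borel_measurable \<mu>" "AE u in \<mu>. \<bar>f u\<bar> \<le> B"
  shows "\<bar>weighted_mean \<mu> \<psi> f\<bar> \<le> B"
proof -
  have "AE u in \<mu>. - B \<le> f u \<and> f u \<le> B" using assms(2) by eventually_elim (simp add: abs_le_iff)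
  from weighted_mean_bounds[OF assms(1) this] show ?thesis by (simp add: abs_le_iff)
qed

lemma weighted_mean_add:
  assumes "integrable \<mu> (\<lambda>u. \<psi> u * f u)" "integrable \<mu> (\<lambda>u. \<psi> u * g u)"
  shows "weighted_mean \<mu> \<psi> (\<lambda>u. f u + g u) = weighted_mean \<mu> \<psi> f + weighted_mean \<mu> \<psi> g"
  using assms by (simp add: weighted_mean_def distrib_left add_divide_distrib)

lemma weighted_mean_cmult: "weighted_mean \<mu> \<psi> (\<lambda>u. c * f u) = c * weighted_mean \<mu> \<psi> f"
  by (simp add: weighted_mean_def mult.left_commute[of _ c])

lemma weighted_mean_exp_expansion:
  assumes s: "s \<in> borel_measurable \<mu>" "AE u in \<mu>. \<bar>s u\<bar> \<le> \<delta>" and \<delta>: "\<delta> \<le> 1"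
  shows "\<bar>weighted_mean \<mu> \<psi> (\<lambda>u. exp (s u)) - 1 - weighted_mean \<mu> \<psi> s\<bar> \<le> \<delta>\<^sup>2"
proof -
  have "AE u in \<mu>. \<bar>exp (s u)\<bar> \<le> exp \<delta>" using s(2) by eventually_elim simp
  then have "integrable \<mu> (\<lambda>u. \<psi> u * exp (s u))" using s(1) by (intro integrable_weight_mult) auto
  moreover have "integrable \<mu> (\<lambda>u. \<psi> u * s u)" using s by (rule integrable_weight_mult)
  ultimately have "weighted_mean \<mu> \<psi> (\<lambda>u. exp (s u) - 1 - s u)
      = weighted_mean \<mu> \<psi> (\<lambda>u. exp (s u)) - 1 - weighted_mean \<mu> \<psi> s"
    using integrable_weight total_weight_pos
    by (simp add: weighted_mean_def right_diff_distrib diff_divide_distrib)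
  moreover have "AE u in \<mu>. \<bar>exp (s u) - 1 - s u\<bar> \<le> \<delta>\<^sup>2"
    using s(2) proof eventually_elim
    case (elim u)
    then have "\<bar>exp (s u) - 1 - s u\<bar> \<le> (s u)\<^sup>2" using \<delta> by (intro abs_exp_minus_one_minus_le_sq) simp
    also have "\<dots> \<le> \<delta>\<^sup>2" using elim by (metis abs_ge_zero power2_abs power_mono)
    finally show ?case .
  qed
  moreover have "(\<lambda>u. exp (s u) - 1 - s u) \<in> borel_measurable \<mu>" using s(1) by measurable
  ultimately show ?thesis using abs_weighted_mean_le by metis
qed

lemma weighted_mean_exp_mult_expansion:
  assumes s: "s \<in> borel_measurable \<mu>" "AE u in \<mu>. \<bar>s u\<bar> \<le> \<delta>" and \<delta>: "\<delta> \<le> 1"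
    and t: "t \<in> borel_measurable \<mu>" "AE u in \<mu>. \<bar>t u\<bar> \<le> \<kappa>"
  shows "\<bar>weighted_mean \<mu> \<psi> (\<lambda>u. exp (s u) * t u) - weighted_mean \<mu> \<psi> t
           - weighted_mean \<mu> \<psi> (\<lambda>u. s u * t u)\<bar> \<le> \<kappa> * \<delta>\<^sup>2"
proof -
  have "AE u in \<mu>. \<bar>exp (s u) * t u\<bar> \<le> exp \<delta> * \<kappa>"
    using s(2) t(2) by eventually_elim (simp add: abs_mult mult_mono)
  then have "integrable \<mu> (\<lambda>u. \<psi> u * (exp (s u) * t u))" using s(1) t(1) by (intro integrable_weight_mult) auto
  moreover have "integrable \<mu> (\<lambda>u. \<psi> u * t u)" using t by (rule integrable_weight_mult)
  moreover have "AE u in \<mu>. \<bar>s u * t u\<bar> \<le> \<delta> * \<kappa>"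
    using s(2) t(2) by eventually_elim (simp add: abs_mult mult_mono)
  then have "integrable \<mu> (\<lambda>u. \<psi> u * (s u * t u))" using s(1) t(1) by (intro integrable_weight_mult) auto
  ultimately have "weighted_mean \<mu> \<psi> (\<lambda>u. t u * (exp (s u) - 1 - s u))
      = weighted_mean \<mu> \<psi> (\<lambda>u. exp (s u) * t u) - weighted_mean \<mu> \<psi> t - weighted_mean \<mu> \<psi> (\<lambda>u. s u * t u)"
    by (simp add: weighted_mean_def algebra_simps diff_divide_distrib add_divide_distrib)
  moreover have "AE u in \<mu>. \<bar>t u * (exp (s u) - 1 - s u)\<bar> \<le> \<kappa> * \<delta>\<^sup>2"
    using s(2) t(2) proof eventually_elim
    case (elim u)
    then have "\<bar>exp (s u) - 1 - s u\<bar> \<le> (s u)\<^sup>2" using \<delta> by (intro abs_exp_minus_one_minus_le_sq) simp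
    also have "\<dots> \<le> \<delta>\<^sup>2" using elim by (metis abs_ge_zero power2_abs power_mono)
    finally show ?case using elim by (simp add: abs_mult mult_mono)
  qed
  moreover have "(\<lambda>u. t u * (exp (s u) - 1 - s u)) \<in> borel_measurable \<mu>" using s(1) t(1) by measurable
  ultimately show ?thesis using abs_weighted_mean_le by metis
qed

lemma weighted_mean_tilt:
  "weighted_mean \<mu> (\<lambda>u. \<psi> u * e u) t = weighted_mean \<mu> \<psi> (\<lambda>u. e u * t u) / weighted_mean \<mu> \<psi> e"
  using total_weight_pos by (simp add: weighted_mean_def mult.assoc)

lemma ln_integral_weight_mult:
  assumes "0 < weighted_mean \<mu> \<psi> e"
  shows "ln (\<integral>u. \<psi> u * e u \<partial>\<mu>) = ln (\<integral>u. \<psi> u \<partial>\<mu>) + ln (weighted_mean \<mu> \<psi> e)"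
proof -
  have "(\<integral>u. \<psi> u * e u \<partial>\<mu>) = (\<integral>u. \<psi> u \<partial>\<mu>) * weighted_mean \<mu> \<psi> e"
    using total_weight_pos by (simp add: weighted_mean_def)
  then show ?thesis using assms total_weight_pos by (simp add: ln_mult)
qed

end

lemma has_derivative_of_quadratic_remainder:
  fixes f :: "'a::real_normed_vector \<Rightarrow> 'b::real_normed_vector"
  assumes "bounded_linear D" "0 < r"
    and remainder: "\<And>h. norm h \<le> r \<Longrightarrow> norm (f (x + h) - f x - D h) \<le> C * (norm h)\<^sup>2"
  shows "(f has_derivative D) (at x)"
  unfolding has_derivative_at2
proof (intro conjI assms(1), rule Lim_null_comparison)
  show "\<forall>\<^sub>F y in at x. norm ((1 / norm (y - x)) *\<^sub>R (f y - (f x + D (y - x)))) \<le> C * norm (y - x)"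
    unfolding eventually_at
  proof (intro exI[of _ r] conjI allI ballI impI \<open>0 < r\<close>)
    fix y assume "y \<noteq> x \<and> dist y x < r"
    then have n: "0 < norm (y - x)" "norm (y - x) \<le> r" by (auto simp: dist_norm)
    have "norm (f (x + (y - x)) - f x - D (y - x)) \<le> C * (norm (y - x))\<^sup>2" by (rule remainder[OF n(2)])
    then have "norm (f y - (f x + D (y - x))) \<le> C * (norm (y - x))\<^sup>2" by (simp add: algebra_simps)
    then show "norm ((1 / norm (y - x)) *\<^sub>R (f y - (f x + D (y - x)))) \<le> C * norm (y - x)"
      using n by (simp add: divide_le_eq power2_eq_square mult.assoc)
  qed
  show "((\<lambda>y. C * norm (y - x)) \<longlongrightarrow> 0) (at x)"
    by (intro tendsto_mult_right_zero tendsto_norm_zero LIM_zero tendsto_ident_at)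
qed

lemma has_derivative_line: "((\<lambda>t. x + t *\<^sub>R y) has_derivative (\<lambda>s. s *\<^sub>R y)) (at t)"
  by (auto intro!: derivative_eq_intros)

text \<open>The constants \<open>r\<close> and \<open>C\<close> are uniform in \<open>x\<close>: this is what lets an expansion survive
  averaging over the disorder.\<close>

definition second_order_expansion ::
  "real \<Rightarrow> real \<Rightarrow> ('a::euclidean_space \<Rightarrow> real) \<Rightarrow> ('a \<Rightarrow> 'a \<Rightarrow> real) \<Rightarrow> ('a \<Rightarrow> 'a \<Rightarrow> 'a \<Rightarrow> real) \<Rightarrow> bool"
where
  "second_order_expansion r C p G H \<longleftrightarrow>
     (\<forall>x. linear (G x)) \<and> (\<forall>x h. linear (H x h)) \<and> (\<forall>x k. linear (\<lambda>h. H x h k)) \<and>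
     (\<forall>x h. norm h \<le> r \<longrightarrow> \<bar>p (x + h) - p x - G x h\<bar> \<le> C * (norm h)\<^sup>2) \<and>
     (\<forall>x h k. norm h \<le> r \<longrightarrow> \<bar>G (x + h) k - G x k - H x h k\<bar> \<le> C * (norm h)\<^sup>2 * norm k)"

context
  fixes r C :: real and p :: "'a::euclidean_space \<Rightarrow> real" and G H
  assumes expansion: "second_order_expansion r C p G H" and r: "0 < r"
begin

lemma second_order_expansion_has_derivative: "(p has_derivative G x) (at x)"
  using expansion r
  by (intro has_derivative_of_quadratic_remainder[where r=r and C=C])
     (simp_all add: second_order_expansion_def linear_conv_bounded_linear)

lemma second_order_expansion_has_derivative_blinfun:
  "((\<lambda>x. Blinfun (G x)) has_derivative (\<lambda>h. Blinfun (H x h))) (at x)"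
proof -
  have lin: "\<And>x. linear (G x)" "\<And>x h. linear (H x h)" "\<And>x k. linear (\<lambda>h. H x h k)"
    using expansion by (simp_all add: second_order_expansion_def)
  have apply_G: "blinfun_apply (Blinfun (G x)) = G x" for x
    using lin(1) by (simp add: bounded_linear_Blinfun_apply linear_conv_bounded_linear)
  have apply_H: "blinfun_apply (Blinfun (H x h)) = H x h" for h
    using lin(2) by (simp add: bounded_linear_Blinfun_apply linear_conv_bounded_linear)
  have "linear (\<lambda>h. Blinfun (H x h))"
    by (rule linearI; rule blinfun_eqI)
       (simp_all add: apply_H plus_blinfun.rep_eq scaleR_blinfun.rep_eq linear_add[OF lin(3)] linear_scale[OF lin(3)])
  \<comment> \<open>\<open>norm_blinfun_bound\<close> needs a nonnegative bound, hence \<open>max C 0\<close>\<close>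
  then show ?thesis
  proof (intro has_derivative_of_quadratic_remainder[where r=r and C="max C 0"] r)
    fix h :: 'a assume h: "norm h \<le> r"
    show "norm (Blinfun (G (x + h)) - Blinfun (G x) - Blinfun (H x h)) \<le> max C 0 * (norm h)\<^sup>2"
    proof (rule norm_blinfun_bound)
      fix k
      have "\<bar>G (x + h) k - G x k - H x h k\<bar> \<le> C * (norm h)\<^sup>2 * norm k"
        using expansion h by (simp add: second_order_expansion_def)
      also have "\<dots> \<le> max C 0 * (norm h)\<^sup>2 * norm k" by (intro mult_right_mono) auto
      finally show "norm (blinfun_apply (Blinfun (G (x + h)) - Blinfun (G x) - Blinfun (H x h)) k)
          \<le> max C 0 * (norm h)\<^sup>2 * norm k"
        by (simp add: minus_blinfun.rep_eq apply_G apply_H)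
    qed simp
  qed (simp add: linear_conv_bounded_linear)
qed

lemma second_order_expansion_twice_differentiable: "twice_differentiable_on p S"
  unfolding twice_differentiable_on_def
proof (intro exI conjI ballI)
  fix x
  have "blinfun_apply (Blinfun (G x)) = G x"
    using expansion by (simp add: second_order_expansion_def bounded_linear_Blinfun_apply linear_conv_bounded_linear)
  then show "(p has_derivative blinfun_apply (Blinfun (G x))) (at x within S)"
    using second_order_expansion_has_derivative by (simp add: has_derivative_at_withinI)
  show "(\<lambda>x. Blinfun (G x)) differentiable at x within S"
    using second_order_expansion_has_derivative_blinfun
    unfolding differentiable_def by (blast intro: has_derivative_at_withinI)
qed

lemma second_order_expansion_has_field_derivative_line:
  "((\<lambda>t. p (x + t *\<^sub>R y)) has_field_derivative G (x + t *\<^sub>R y) y) (at t)"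
proof -
  have "((p \<circ> (\<lambda>t. x + t *\<^sub>R y)) has_derivative (G (x + t *\<^sub>R y) \<circ> (\<lambda>s. s *\<^sub>R y))) (at t)"
    by (rule diff_chain_at[OF has_derivative_line second_order_expansion_has_derivative])
  moreover have "G (x + t *\<^sub>R y) \<circ> (\<lambda>s. s *\<^sub>R y) = (\<lambda>s. G (x + t *\<^sub>R y) y * s)"
    using expansion by (auto simp: fun_eq_iff second_order_expansion_def linear_scale)
  ultimately show ?thesis by (simp add: has_field_derivative_def o_def)
qed

lemma second_order_expansion_deriv_line: "deriv (\<lambda>t. p (x + t *\<^sub>R y)) = (\<lambda>t. G (x + t *\<^sub>R y) y)"
  using second_order_expansion_has_field_derivative_line DERIV_imp_deriv by blast

lemma second_order_expansion_deriv2_line: "deriv (\<lambda>t. deriv (\<lambda>s. p (x + s *\<^sub>R y)) t) 0 = H x y y"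
proof -
  have "((\<lambda>z. Blinfun (G z)) has_derivative (\<lambda>h. Blinfun (H x h))) (at ((\<lambda>t. x + t *\<^sub>R y) 0))"
    using second_order_expansion_has_derivative_blinfun by simp
  from diff_chain_at[OF has_derivative_line this]
  have "((\<lambda>t. Blinfun (G (x + t *\<^sub>R y))) has_derivative (\<lambda>s. Blinfun (H x (s *\<^sub>R y)))) (at 0)"
    by (simp add: o_def)
  from blinfun.bounded_linear_left[THEN bounded_linear.has_derivative, OF this, of y]
  have "((\<lambda>t. G (x + t *\<^sub>R y) y) has_derivative (\<lambda>s. H x (s *\<^sub>R y) y)) (at 0)"
    using expansion
    by (simp add: second_order_expansion_def bounded_linear_Blinfun_apply linear_conv_bounded_linear)
  moreover have "(\<lambda>s. H x (s *\<^sub>R y) y) = (*) (H x y y)"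
    using expansion by (simp add: fun_eq_iff second_order_expansion_def linear_scale[where f="\<lambda>h. H x h y"] mult.commute)
  ultimately have "((\<lambda>t. G (x + t *\<^sub>R y) y) has_field_derivative H x y y) (at 0)"
    by (simp add: has_field_derivative_def)
  then show ?thesis unfolding second_order_expansion_deriv_line by (rule DERIV_imp_deriv)
qed

end

text \<open>\<open>F\<close> is not assumed integrable. If it is not, \<open>partition\<close> takes the junk value 0 and
  \<open>log_partition\<close>, \<open>gibbs_mean\<close> and \<open>gibbs_cov\<close> all vanish, so the lemmas below hold
  in that case too.\<close>

locale gibbs_family = prob_space \<mu> for \<mu> :: "'u measure" +
  fixes F :: "'u \<Rightarrow> real" and \<phi> :: "'u \<Rightarrow> 'a::euclidean_space"
  assumes F_measurable [measurable]: "F \<in> borel_measurable \<mu>" and F_pos: "\<And>u. 0 < F u"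
    and \<phi>_measurable [measurable]: "\<phi> \<in> borel_measurable \<mu>"
    and norm_\<phi>_le: "AE u in \<mu>. norm (\<phi> u) \<le> 1"
begin

definition weight :: "'a \<Rightarrow> 'u \<Rightarrow> real" where
  "weight x u = F u * exp (x \<bullet> \<phi> u)"

definition partition :: "'a \<Rightarrow> real" where
  "partition x = (\<integral>u. weight x u \<partial>\<mu>)"

definition log_partition :: "'a \<Rightarrow> real" where
  "log_partition x = ln (partition x)"

definition gibbs_mean :: "'a \<Rightarrow> ('u \<Rightarrow> real) \<Rightarrow> real" where
  "gibbs_mean x = weighted_mean \<mu> (weight x)"

definition gibbs_cov :: "'a \<Rightarrow> 'a \<Rightarrow> 'a \<Rightarrow> real" where
  "gibbs_cov x h k = gibbs_mean x (\<lambda>u. (h \<bullet> \<phi> u) * (k \<bullet> \<phi> u))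
     - gibbs_mean x (\<lambda>u. h \<bullet> \<phi> u) * gibbs_mean x (\<lambda>u. k \<bullet> \<phi> u)"

lemma abs_inner_\<phi>_le: "AE u in \<mu>. \<bar>h \<bullet> \<phi> u\<bar> \<le> norm h"
  using norm_\<phi>_le
proof eventually_elim
  case (elim u)
  have "\<bar>h \<bullet> \<phi> u\<bar> \<le> norm h * norm (\<phi> u)" by (rule Cauchy_Schwarz_ineq2)
  also have "\<dots> \<le> norm h" using elim by (simp add: mult_left_le)
  finally show ?case .
qed

lemma weight_add: "weight (x + h) u = weight x u * exp (h \<bullet> \<phi> u)"
  by (simp add: weight_def inner_add_left exp_add mult.assoc)

lemma weighted_prob_space_weight:
  assumes "integrable \<mu> F"
  shows "weighted_prob_space \<mu> (weight x)"
proof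
  interpret F: weighted_prob_space \<mu> F by unfold_locales (use assms F_pos in auto)
  have "AE u in \<mu>. \<bar>exp (x \<bullet> \<phi> u)\<bar> \<le> exp (norm x)"
    using abs_inner_\<phi>_le[of x] by eventually_elim simp
  then show "integrable \<mu> (weight x)"
    unfolding weight_def by (intro F.integrable_weight_mult) measurable
  show "0 < weight x u" for u using F_pos by (simp add: weight_def)
qed

lemma partition_not_integrable:
  assumes "\<not> integrable \<mu> F"
  shows "partition x = 0"
proof -
  have "\<not> integrable \<mu> (weight x)"
  proof
    assume "integrable \<mu> (weight x)"
    then interpret W: weighted_prob_space \<mu> "weight x"
      by unfold_locales (simp_all add: weight_def F_pos)
    have "AE u in \<mu>. \<bar>exp (- x \<bullet> \<phi> u)\<bar> \<le> exp (norm x)"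
      using abs_inner_\<phi>_le[of x] by eventually_elim simp
    then have "integrable \<mu> (\<lambda>u. weight x u * exp (- x \<bullet> \<phi> u))"
      by (intro W.integrable_weight_mult) measurable
    moreover have "(\<lambda>u. weight x u * exp (- x \<bullet> \<phi> u)) = F"
      by (simp add: weight_def fun_eq_iff mult.assoc flip: exp_add)
    ultimately show False using assms by simp
  qed
  then show ?thesis by (simp add: partition_def not_integrable_integral_eq)
qed

lemma gibbs_mean_not_integrable: "\<not> integrable \<mu> F \<Longrightarrow> gibbs_mean x f = 0"
  using partition_not_integrable by (simp add: gibbs_mean_def weighted_mean_def partition_def)

lemma gibbs_mean_exp_inner_bounds:
  assumes "integrable \<mu> F"
  shows "exp (- norm h) \<le> gibbs_mean x (\<lambda>u. exp (h \<bullet> \<phi> u))"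
    and "gibbs_mean x (\<lambda>u. exp (h \<bullet> \<phi> u)) \<le> exp (norm h)"
proof -
  interpret W: weighted_prob_space \<mu> "weight x" by (rule weighted_prob_space_weight[OF assms])
  have "AE u in \<mu>. exp (- norm h) \<le> exp (h \<bullet> \<phi> u) \<and> exp (h \<bullet> \<phi> u) \<le> exp (norm h)"
    using abs_inner_\<phi>_le[of h] by eventually_elim (simp add: abs_le_iff)
  from W.weighted_mean_bounds[OF _ this] show
    "exp (- norm h) \<le> gibbs_mean x (\<lambda>u. exp (h \<bullet> \<phi> u))"
    "gibbs_mean x (\<lambda>u. exp (h \<bullet> \<phi> u)) \<le> exp (norm h)"
    by (simp_all add: gibbs_mean_def)
qed

lemma log_partition_add:
  assumes "integrable \<mu> F"
  shows "log_partition (x + h) = log_partition x + ln (gibbs_mean x (\<lambda>u. exp (h \<bullet> \<phi> u)))"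
proof -
  interpret W: weighted_prob_space \<mu> "weight x" by (rule weighted_prob_space_weight[OF assms])
  have "0 < gibbs_mean x (\<lambda>u. exp (h \<bullet> \<phi> u))"
    using gibbs_mean_exp_inner_bounds(1)[OF assms] by (rule less_le_trans[OF exp_gt_zero])
  then show ?thesis
    unfolding log_partition_def partition_def weight_add gibbs_mean_def
    by (rule W.ln_integral_weight_mult)
qed

lemma gibbs_mean_add:
  "gibbs_mean (x + h) t = gibbs_mean x (\<lambda>u. exp (h \<bullet> \<phi> u) * t u) / gibbs_mean x (\<lambda>u. exp (h \<bullet> \<phi> u))"
proof (cases "integrable \<mu> F")
  case True
  interpret W: weighted_prob_space \<mu> "weight x" by (rule weighted_prob_space_weight[OF True])
  show ?thesis unfolding gibbs_mean_def weight_add[abs_def] by (rule W.weighted_mean_tilt)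
qed (simp add: gibbs_mean_not_integrable)

lemma log_partition_lipschitz: "\<bar>log_partition x' - log_partition x\<bar> \<le> norm (x' - x)"
proof (cases "integrable \<mu> F")
  case True
  define h where "h = x' - x"
  have "log_partition x' - log_partition x = ln (gibbs_mean x (\<lambda>u. exp (h \<bullet> \<phi> u)))"
    using log_partition_add[OF True, of x h] by (simp add: h_def)
  moreover have m: "exp (- norm h) \<le> gibbs_mean x (\<lambda>u. exp (h \<bullet> \<phi> u))"
    "gibbs_mean x (\<lambda>u. exp (h \<bullet> \<phi> u)) \<le> exp (norm h)"
    using gibbs_mean_exp_inner_bounds[OF True] by auto
  moreover have pos: "0 < gibbs_mean x (\<lambda>u. exp (h \<bullet> \<phi> u))"
    using m(1) by (rule less_le_trans[OF exp_gt_zero])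
  moreover have "- norm h \<le> ln (gibbs_mean x (\<lambda>u. exp (h \<bullet> \<phi> u)))"
    using m(1) pos by (simp add: ln_ge_iff)
  moreover have "ln (gibbs_mean x (\<lambda>u. exp (h \<bullet> \<phi> u))) \<le> norm h"
    using m(2) pos by (metis ln_exp ln_le_cancel_iff exp_gt_zero)
  ultimately show ?thesis by (simp add: h_def abs_le_iff)
qed (simp add: log_partition_def partition_not_integrable)

lemma abs_inner_\<phi>_mult_le: "AE u in \<mu>. \<bar>(h \<bullet> \<phi> u) * (k \<bullet> \<phi> u)\<bar> \<le> norm h * norm k"
  using abs_inner_\<phi>_le[of h] abs_inner_\<phi>_le[of k] by eventually_elim (simp add: abs_mult mult_mono)

lemma abs_gibbs_mean_inner_le: "\<bar>gibbs_mean x (\<lambda>u. h \<bullet> \<phi> u)\<bar> \<le> norm h"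
proof (cases "integrable \<mu> F")
  case True
  interpret W: weighted_prob_space \<mu> "weight x" by (rule weighted_prob_space_weight[OF True])
  show ?thesis unfolding gibbs_mean_def by (rule W.abs_weighted_mean_le[OF _ abs_inner_\<phi>_le]) simp
qed (simp add: gibbs_mean_not_integrable)

lemma abs_gibbs_cov_le: "\<bar>gibbs_cov x h k\<bar> \<le> 2 * norm h * norm k"
proof (cases "integrable \<mu> F")
  case True
  interpret W: weighted_prob_space \<mu> "weight x" by (rule weighted_prob_space_weight[OF True])
  have "\<bar>gibbs_mean x (\<lambda>u. (h \<bullet> \<phi> u) * (k \<bullet> \<phi> u))\<bar> \<le> norm h * norm k"
    unfolding gibbs_mean_def by (rule W.abs_weighted_mean_le[OF _ abs_inner_\<phi>_mult_le]) simp
  moreover have "\<bar>gibbs_mean x (\<lambda>u. h \<bullet> \<phi> u) * gibbs_mean x (\<lambda>u. k \<bullet> \<phi> u)\<bar> \<le> norm h * norm k"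
    unfolding abs_mult by (intro mult_mono abs_gibbs_mean_inner_le) auto
  ultimately show ?thesis unfolding gibbs_cov_def by linarith
qed (simp add: gibbs_cov_def gibbs_mean_not_integrable)

lemma gibbs_cov_commute: "gibbs_cov x h k = gibbs_cov x k h"
  by (simp add: gibbs_cov_def mult.commute)

lemma linear_gibbs_mean_inner: "linear (\<lambda>h. gibbs_mean x (\<lambda>u. h \<bullet> \<phi> u))"
proof (cases "integrable \<mu> F")
  case True
  interpret W: weighted_prob_space \<mu> "weight x" by (rule weighted_prob_space_weight[OF True])
  have int: "integrable \<mu> (\<lambda>u. weight x u * (h \<bullet> \<phi> u))" for h
    by (rule W.integrable_weight_mult[OF _ abs_inner_\<phi>_le]) simp
  show ?thesis
    by (rule linearI) (simp_all add: gibbs_mean_def inner_add_left W.weighted_mean_add[OF int int]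
        W.weighted_mean_cmult)
qed (simp add: gibbs_mean_not_integrable linear_zero)

lemma linear_gibbs_cov: "linear (\<lambda>h. gibbs_cov x h k)"
proof (cases "integrable \<mu> F")
  case True
  interpret W: weighted_prob_space \<mu> "weight x" by (rule weighted_prob_space_weight[OF True])
  have int: "integrable \<mu> (\<lambda>u. weight x u * ((h \<bullet> \<phi> u) * (k \<bullet> \<phi> u)))" for h
    by (rule W.integrable_weight_mult[OF _ abs_inner_\<phi>_mult_le]) simp
  have "gibbs_mean x (\<lambda>u. ((h + h') \<bullet> \<phi> u) * (k \<bullet> \<phi> u))
      = gibbs_mean x (\<lambda>u. (h \<bullet> \<phi> u) * (k \<bullet> \<phi> u)) + gibbs_mean x (\<lambda>u. (h' \<bullet> \<phi> u) * (k \<bullet> \<phi> u))"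
    for h h' unfolding gibbs_mean_def inner_add_left distrib_right by (rule W.weighted_mean_add[OF int int])
  moreover have "gibbs_mean x (\<lambda>u. ((c *\<^sub>R h) \<bullet> \<phi> u) * (k \<bullet> \<phi> u))
      = c * gibbs_mean x (\<lambda>u. (h \<bullet> \<phi> u) * (k \<bullet> \<phi> u))" for c h
    using W.weighted_mean_cmult[of c] by (simp add: gibbs_mean_def mult.assoc)
  ultimately show ?thesis
    using linear_gibbs_mean_inner[of x, THEN linear_add] linear_gibbs_mean_inner[of x, THEN linear_scale]
    by (intro linearI) (simp_all add: gibbs_cov_def algebra_simps)
qed (simp add: gibbs_cov_def gibbs_mean_not_integrable linear_zero)

lemma log_partition_expansion:
  assumes "norm h \<le> 1/4"
  shows "\<bar>log_partition (x + h) - log_partition x - gibbs_mean x (\<lambda>u. h \<bullet> \<phi> u)\<bar> \<le> 5 * (norm h)\<^sup>2"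
proof (cases "integrable \<mu> F")
  case True
  interpret W: weighted_prob_space \<mu> "weight x" by (rule weighted_prob_space_weight[OF True])
  have "\<bar>gibbs_mean x (\<lambda>u. exp (h \<bullet> \<phi> u)) - 1 - gibbs_mean x (\<lambda>u. h \<bullet> \<phi> u)\<bar> \<le> (norm h)\<^sup>2"
    unfolding gibbs_mean_def using assms by (intro W.weighted_mean_exp_expansion abs_inner_\<phi>_le) auto
  from abs_ln_minus_le_sq[OF abs_gibbs_mean_inner_le this assms] show ?thesis
    by (simp add: log_partition_add[OF True])
qed (simp add: log_partition_def partition_not_integrable gibbs_mean_not_integrable)

lemma gibbs_mean_inner_expansion:
  assumes "norm h \<le> 1/4"
  shows "\<bar>gibbs_mean (x + h) (\<lambda>u. k \<bullet> \<phi> u) - gibbs_mean x (\<lambda>u. k \<bullet> \<phi> u) - gibbs_cov x h k\<bar>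
    \<le> 10 * (norm h)\<^sup>2 * norm k"
proof (cases "integrable \<mu> F")
  case True
  interpret W: weighted_prob_space \<mu> "weight x" by (rule weighted_prob_space_weight[OF True])
  have "\<bar>gibbs_mean x (\<lambda>u. (h \<bullet> \<phi> u) * (k \<bullet> \<phi> u))\<bar> \<le> norm h * norm k"
    unfolding gibbs_mean_def by (rule W.abs_weighted_mean_le[OF _ abs_inner_\<phi>_mult_le]) simp
  moreover have "\<bar>gibbs_mean x (\<lambda>u. exp (h \<bullet> \<phi> u)) - 1 - gibbs_mean x (\<lambda>u. h \<bullet> \<phi> u)\<bar> \<le> (norm h)\<^sup>2"
    unfolding gibbs_mean_def using assms by (intro W.weighted_mean_exp_expansion abs_inner_\<phi>_le) auto
  moreover have "\<bar>gibbs_mean x (\<lambda>u. exp (h \<bullet> \<phi> u) * (k \<bullet> \<phi> u)) - gibbs_mean x (\<lambda>u. k \<bullet> \<phi> u)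
      - gibbs_mean x (\<lambda>u. (h \<bullet> \<phi> u) * (k \<bullet> \<phi> u))\<bar> \<le> norm k * (norm h)\<^sup>2"
    unfolding gibbs_mean_def using assms
    by (intro W.weighted_mean_exp_mult_expansion abs_inner_\<phi>_le) auto
  ultimately show ?thesis
    unfolding gibbs_mean_add gibbs_cov_def
    by (intro abs_ratio_minus_le abs_gibbs_mean_inner_le assms)
qed (simp add: gibbs_cov_def gibbs_mean_not_integrable)

lemma log_partition_second_order_expansion:
  "second_order_expansion (1/4) 10 log_partition (\<lambda>x h. gibbs_mean x (\<lambda>u. h \<bullet> \<phi> u)) gibbs_cov"
  unfolding second_order_expansion_def
proof (intro conjI allI impI linear_gibbs_mean_inner linear_gibbs_cov gibbs_mean_inner_expansion)
  show "linear (gibbs_cov x h)" for x h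
  proof -
    have "gibbs_cov x h = (\<lambda>k. gibbs_cov x k h)" by (simp add: fun_eq_iff gibbs_cov_commute)
    then show ?thesis using linear_gibbs_cov[of x h] by simp
  qed
  show "\<bar>log_partition (x + h) - log_partition x - gibbs_mean x (\<lambda>u. h \<bullet> \<phi> u)\<bar> \<le> 10 * (norm h)\<^sup>2"
    if "norm h \<le> 1/4" for x h
    using log_partition_expansion[OF that, of x] by simp
qed

end

lemma (in prob_space) abs_integral_le_const:
  fixes f :: "'a \<Rightarrow> real"
  assumes "f \<in> borel_measurable M" "\<And>x. x \<in> space M \<Longrightarrow> \<bar>f x\<bar> \<le> B"
  shows "\<bar>\<integral>x. f x \<partial>M\<bar> \<le> B"
proof -
  have "integrable M f" using assms by (intro integrable_const_bound[where B=B]) auto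
  have "\<bar>\<integral>x. f x \<partial>M\<bar> \<le> (\<integral>x. \<bar>f x\<bar> \<partial>M)" by (rule integral_abs_bound)
  also have "\<dots> \<le> B" using \<open>integrable M f\<close> assms(2) by (intro integral_le_const) auto
  finally show ?thesis .
qed

lemma linear_integral:
  fixes f :: "'a::real_vector \<Rightarrow> 'w \<Rightarrow> real"
  assumes integrable: "\<And>h. integrable \<Omega> (f h)" and linear: "\<And>\<omega>. \<omega> \<in> space \<Omega> \<Longrightarrow> linear (\<lambda>h. f h \<omega>)"
  shows "linear (\<lambda>h. \<integral>\<omega>. f h \<omega> \<partial>\<Omega>)"
proof (rule linearI)
  fix h h' :: 'a and s :: real
  have "(\<integral>\<omega>. f (h + h') \<omega> \<partial>\<Omega>) = (\<integral>\<omega>. f h \<omega> + f h' \<omega> \<partial>\<Omega>)"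
    by (rule Bochner_Integration.integral_cong[OF refl]) (simp add: linear_add[OF linear])
  also have "\<dots> = (\<integral>\<omega>. f h \<omega> \<partial>\<Omega>) + (\<integral>\<omega>. f h' \<omega> \<partial>\<Omega>)"
    by (rule Bochner_Integration.integral_add[OF integrable integrable])
  finally show "(\<integral>\<omega>. f (h + h') \<omega> \<partial>\<Omega>) = (\<integral>\<omega>. f h \<omega> \<partial>\<Omega>) + (\<integral>\<omega>. f h' \<omega> \<partial>\<Omega>)" .
  have "(\<integral>\<omega>. f (s *\<^sub>R h) \<omega> \<partial>\<Omega>) = (\<integral>\<omega>. s * f h \<omega> \<partial>\<Omega>)"
    by (rule Bochner_Integration.integral_cong[OF refl]) (simp add: linear_scale[OF linear])
  then show "(\<integral>\<omega>. f (s *\<^sub>R h) \<omega> \<partial>\<Omega>) = s *\<^sub>R (\<integral>\<omega>. f h \<omega> \<partial>\<Omega>)" by simp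
qed

lemma second_order_expansion_integral:
  fixes L :: "'a::euclidean_space \<Rightarrow> 'w \<Rightarrow> real" and G :: "'a \<Rightarrow> 'a \<Rightarrow> 'w \<Rightarrow> real"
    and H :: "'a \<Rightarrow> 'a \<Rightarrow> 'a \<Rightarrow> 'w \<Rightarrow> real"
  assumes "prob_space \<Omega>"
    and measurable: "\<And>x. L x \<in> borel_measurable \<Omega>" "\<And>x h. G x h \<in> borel_measurable \<Omega>"
      "\<And>x h k. H x h k \<in> borel_measurable \<Omega>"
    and integrable: "\<And>x. integrable \<Omega> (L x)"
    and expansion: "\<And>\<omega>. \<omega> \<in> space \<Omega> \<Longrightarrow>
      second_order_expansion r C (\<lambda>x. L x \<omega>) (\<lambda>x h. G x h \<omega>) (\<lambda>x h k. H x h k \<omega>)"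
    and G_le: "\<And>x h \<omega>. \<omega> \<in> space \<Omega> \<Longrightarrow> \<bar>G x h \<omega>\<bar> \<le> a * norm h"
    and H_le: "\<And>x h k \<omega>. \<omega> \<in> space \<Omega> \<Longrightarrow> \<bar>H x h k \<omega>\<bar> \<le> b * norm h * norm k"
  shows "second_order_expansion r C (\<lambda>x. (\<integral>\<omega>. L x \<omega> \<partial>\<Omega>) + c)
      (\<lambda>x h. \<integral>\<omega>. G x h \<omega> \<partial>\<Omega>) (\<lambda>x h k. \<integral>\<omega>. H x h k \<omega> \<partial>\<Omega>)"
proof -
  interpret prob_space \<Omega> by fact
  have int_G: "integrable \<Omega> (G x h)" for x h
    using measurable G_le by (intro integrable_const_bound[where B="a * norm h"]) auto
  have int_H: "integrable \<Omega> (H x h k)" for x h k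
    using measurable H_le by (intro integrable_const_bound[where B="b * norm h * norm k"]) auto
  have lin: "linear (\<lambda>h. G x h \<omega>)" "linear (\<lambda>k. H x h k \<omega>)" "linear (\<lambda>h. H x h k \<omega>)"
    if "\<omega> \<in> space \<Omega>" for x h k \<omega>
    using expansion[OF that] by (simp_all add: second_order_expansion_def)
  show ?thesis
    unfolding second_order_expansion_def
  proof (intro conjI allI impI)
    show "linear (\<lambda>h. \<integral>\<omega>. G x h \<omega> \<partial>\<Omega>)" for x by (rule linear_integral[OF int_G lin(1)])
    show "linear (\<lambda>k. \<integral>\<omega>. H x h k \<omega> \<partial>\<Omega>)" for x h by (rule linear_integral[OF int_H lin(2)])
    show "linear (\<lambda>h. \<integral>\<omega>. H x h k \<omega> \<partial>\<Omega>)" for x k by (rule linear_integral[OF int_H lin(3)])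
  next
    fix x h :: 'a assume h: "norm h \<le> r"
    have "(\<integral>\<omega>. L (x + h) \<omega> \<partial>\<Omega>) + c - ((\<integral>\<omega>. L x \<omega> \<partial>\<Omega>) + c) - (\<integral>\<omega>. G x h \<omega> \<partial>\<Omega>)
        = (\<integral>\<omega>. L (x + h) \<omega> - L x \<omega> - G x h \<omega> \<partial>\<Omega>)"
      using integrable int_G by simp
    also have "\<bar>\<dots>\<bar> \<le> C * (norm h)\<^sup>2"
      using expansion h measurable by (intro abs_integral_le_const) (auto simp: second_order_expansion_def)
    finally show "\<bar>(\<integral>\<omega>. L (x + h) \<omega> \<partial>\<Omega>) + c - ((\<integral>\<omega>. L x \<omega> \<partial>\<Omega>) + c) - (\<integral>\<omega>. G x h \<omega> \<partial>\<Omega>)\<bar>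
        \<le> C * (norm h)\<^sup>2" .
    fix k
    have "(\<integral>\<omega>. G (x + h) k \<omega> \<partial>\<Omega>) - (\<integral>\<omega>. G x k \<omega> \<partial>\<Omega>) - (\<integral>\<omega>. H x h k \<omega> \<partial>\<Omega>)
        = (\<integral>\<omega>. G (x + h) k \<omega> - G x k \<omega> - H x h k \<omega> \<partial>\<Omega>)"
      using int_G int_H by simp
    also have "\<bar>\<dots>\<bar> \<le> C * (norm h)\<^sup>2 * norm k"
      using expansion h measurable by (intro abs_integral_le_const) (auto simp: second_order_expansion_def)
    finally show "\<bar>(\<integral>\<omega>. G (x + h) k \<omega> \<partial>\<Omega>) - (\<integral>\<omega>. G x k \<omega> \<partial>\<Omega>) - (\<integral>\<omega>. H x h k \<omega> \<partial>\<Omega>)\<bar>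
        \<le> C * (norm h)\<^sup>2 * norm k" .
  qed
qed

lemma measurable_integral_kernel:
  fixes f :: "'a \<Rightarrow> 'b \<Rightarrow> real"
  assumes K: "K \<in> \<Omega> \<rightarrow>\<^sub>M subprob_algebra U"
    and f: "(\<lambda>(x, y). f x y) \<in> borel_measurable (\<Omega> \<Otimes>\<^sub>M U)"
  shows "(\<lambda>x. \<integral>y. f x y \<partial>K x) \<in> borel_measurable \<Omega>"
proof -
  have "(\<lambda>x. distr (K x) (\<Omega> \<Otimes>\<^sub>M U) (Pair x)) \<in> \<Omega> \<rightarrow>\<^sub>M subprob_algebra (\<Omega> \<Otimes>\<^sub>M U)"
    by (rule measurable_distr2[where f=Pair and M=U, OF _ K]) (simp add: case_prod_Pair measurable_id)
  from measurable_compose[OF this integral_measurable_subprob_algebra[OF f]]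
  have "(\<lambda>x. \<integral>z. (\<lambda>(x, y). f x y) z \<partial>distr (K x) (\<Omega> \<Otimes>\<^sub>M U) (Pair x)) \<in> borel_measurable \<Omega>" .
  moreover have "(\<integral>z. (\<lambda>(x, y). f x y) z \<partial>distr (K x) (\<Omega> \<Otimes>\<^sub>M U) (Pair x)) = (\<integral>y. f x y \<partial>K x)"
    if x: "x \<in> space \<Omega>" for x
  proof -
    have "sets (K x) = sets U" using measurable_space[OF K x] by (simp add: space_subprob_algebra)
    then have "Pair x \<in> K x \<rightarrow>\<^sub>M \<Omega> \<Otimes>\<^sub>M U"
      using x by (simp add: measurable_Pair1' cong: measurable_cong_sets)
    then show ?thesis by (subst integral_distr[OF _ f]) auto
  qed
  ultimately show ?thesis by (rule measurable_cong[THEN iffD1, rotated]) simp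
qed

lemma second_order_expansion_const:
  "0 \<le> C \<Longrightarrow> second_order_expansion r C (\<lambda>_. c) (\<lambda>_ _. 0) (\<lambda>_ _ _. 0)"
  by (simp add: second_order_expansion_def linear_zero)

context
  fixes \<Omega> :: "'w measure" and U :: "'u measure" and K :: "'w \<Rightarrow> 'u measure"
    and F :: "'w \<Rightarrow> 'u \<Rightarrow> real" and \<phi> :: "'u \<Rightarrow> 'a::euclidean_space"
  assumes \<Omega>: "prob_space \<Omega>" and K: "K \<in> \<Omega> \<rightarrow>\<^sub>M prob_algebra U"
    and F_measurable: "(\<lambda>(\<omega>, u). F \<omega> u) \<in> borel_measurable (\<Omega> \<Otimes>\<^sub>M U)" and F_pos: "\<And>\<omega> u. 0 < F \<omega> u"
    and \<phi>_measurable: "\<phi> \<in> borel_measurable U"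
    and norm_\<phi>_le: "\<And>\<omega>. \<omega> \<in> space \<Omega> \<Longrightarrow> AE u in K \<omega>. norm (\<phi> u) \<le> 1"
begin

lemma gibbs_family_kernel:
  assumes "\<omega> \<in> space \<Omega>"
  shows "gibbs_family (K \<omega>) (F \<omega>) \<phi>"
proof -
  have sets: "sets (K \<omega>) = sets U" and "prob_space (K \<omega>)"
    using measurable_space[OF K assms(1)] by (auto simp: space_prob_algebra)
  moreover have "F \<omega> \<in> borel_measurable U"
    using measurable_Pair2[OF F_measurable assms(1)] by simp
  ultimately show ?thesis
    using norm_\<phi>_le[OF assms] F_pos \<phi>_measurable
    by (intro gibbs_family.intro gibbs_family_axioms.intro) (simp_all cong: measurable_cong_sets[OF sets refl])
qed

lemma measurable_weighted_integral_kernel: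
  assumes "f \<in> borel_measurable U"
  shows "(\<lambda>\<omega>. \<integral>u. F \<omega> u * exp (x \<bullet> \<phi> u) * f u \<partial>K \<omega>) \<in> borel_measurable \<Omega>"
proof (rule measurable_integral_kernel[OF measurable_prob_algebraD[OF K]])
  have "(\<lambda>z. F (fst z) (snd z)) \<in> borel_measurable (\<Omega> \<Otimes>\<^sub>M U)"
    using F_measurable by (simp add: case_prod_beta')
  then show "(\<lambda>(\<omega>, u). F \<omega> u * exp (x \<bullet> \<phi> u) * f u) \<in> borel_measurable (\<Omega> \<Otimes>\<^sub>M U)"
    using \<phi>_measurable assms unfolding case_prod_beta by measurable
qed

lemma measurable_partition_kernel:
  "(\<lambda>\<omega>. \<integral>u. F \<omega> u * exp (x \<bullet> \<phi> u) \<partial>K \<omega>) \<in> borel_measurable \<Omega>"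
  using measurable_weighted_integral_kernel[of "\<lambda>_. 1" x] by simp

lemma log_partition_kernel_eq:
  assumes "\<omega> \<in> space \<Omega>"
  shows "gibbs_family.log_partition (K \<omega>) (F \<omega>) \<phi> x = ln (\<integral>u. F \<omega> u * exp (x \<bullet> \<phi> u) \<partial>K \<omega>)"
proof -
  interpret gibbs_family "K \<omega>" "F \<omega>" \<phi> by (rule gibbs_family_kernel[OF assms])
  show ?thesis by (simp add: log_partition_def partition_def weight_def)
qed

lemma measurable_log_partition_kernel:
  "(\<lambda>\<omega>. gibbs_family.log_partition (K \<omega>) (F \<omega>) \<phi> x) \<in> borel_measurable \<Omega>"
  using borel_measurable_ln[OF measurable_partition_kernel]
  by (subst measurable_cong[OF log_partition_kernel_eq]) simp_all

lemma measurable_gibbs_mean_kernel: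
  assumes "f \<in> borel_measurable U"
  shows "(\<lambda>\<omega>. gibbs_family.gibbs_mean (K \<omega>) (F \<omega>) \<phi> x f) \<in> borel_measurable \<Omega>"
proof (rule measurable_cong[THEN iffD2])
  show "gibbs_family.gibbs_mean (K \<omega>) (F \<omega>) \<phi> x f
      = (\<integral>u. F \<omega> u * exp (x \<bullet> \<phi> u) * f u \<partial>K \<omega>) / (\<integral>u. F \<omega> u * exp (x \<bullet> \<phi> u) \<partial>K \<omega>)"
    if "\<omega> \<in> space \<Omega>" for \<omega>
    using gibbs_family_kernel[OF that]
    by (simp add: gibbs_family.gibbs_mean_def weighted_mean_def gibbs_family.weight_def)
qed (rule borel_measurable_divide[OF measurable_weighted_integral_kernel[OF assms] measurable_partition_kernel])

lemma measurable_gibbs_cov_kernel: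
  "(\<lambda>\<omega>. gibbs_family.gibbs_cov (K \<omega>) (F \<omega>) \<phi> x h k) \<in> borel_measurable \<Omega>"
proof (rule measurable_cong[THEN iffD2])
  show "gibbs_family.gibbs_cov (K \<omega>) (F \<omega>) \<phi> x h k
      = gibbs_family.gibbs_mean (K \<omega>) (F \<omega>) \<phi> x (\<lambda>u. (h \<bullet> \<phi> u) * (k \<bullet> \<phi> u))
        - gibbs_family.gibbs_mean (K \<omega>) (F \<omega>) \<phi> x (\<lambda>u. h \<bullet> \<phi> u)
          * gibbs_family.gibbs_mean (K \<omega>) (F \<omega>) \<phi> x (\<lambda>u. k \<bullet> \<phi> u)"
    if "\<omega> \<in> space \<Omega>" for \<omega>
    using gibbs_family_kernel[OF that] by (simp add: gibbs_family.gibbs_cov_def)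
  show "(\<lambda>\<omega>. gibbs_family.gibbs_mean (K \<omega>) (F \<omega>) \<phi> x (\<lambda>u. (h \<bullet> \<phi> u) * (k \<bullet> \<phi> u))
        - gibbs_family.gibbs_mean (K \<omega>) (F \<omega>) \<phi> x (\<lambda>u. h \<bullet> \<phi> u)
          * gibbs_family.gibbs_mean (K \<omega>) (F \<omega>) \<phi> x (\<lambda>u. k \<bullet> \<phi> u)) \<in> borel_measurable \<Omega>"
  proof -
    have "(\<lambda>u. h \<bullet> \<phi> u) \<in> borel_measurable U" for h using \<phi>_measurable by measurable
    then show ?thesis
      by (intro borel_measurable_diff borel_measurable_times measurable_gibbs_mean_kernel) auto
  qed
qed

lemma integrable_log_partition_kernel_transfer:
  assumes "integrable \<Omega> (\<lambda>\<omega>. gibbs_family.log_partition (K \<omega>) (F \<omega>) \<phi> x)"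
  shows "integrable \<Omega> (\<lambda>\<omega>. gibbs_family.log_partition (K \<omega>) (F \<omega>) \<phi> y)"
proof (rule Bochner_Integration.integrable_bound
    [OF Bochner_Integration.integrable_add[OF integrable_abs[OF assms] finite_measure.integrable_const[OF prob_space.finite_measure[OF \<Omega>]]]])
  show "AE \<omega> in \<Omega>. norm (gibbs_family.log_partition (K \<omega>) (F \<omega>) \<phi> y)
      \<le> norm (\<bar>gibbs_family.log_partition (K \<omega>) (F \<omega>) \<phi> x\<bar> + norm (y - x))"
    using gibbs_family.log_partition_lipschitz[OF gibbs_family_kernel, of _ y x]
    by (intro AE_I2) fastforce
qed (rule measurable_log_partition_kernel)

lemma annealed_log_partition_second_order_expansion:
  obtains G H where
    "second_order_expansion (1/4) 10
       (\<lambda>x. (\<integral>\<omega>. ln (\<integral>u. F \<omega> u * exp (x \<bullet> \<phi> u) \<partial>K \<omega>) \<partial>\<Omega>) + c) G H"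
    "\<And>x h. \<bar>G x h\<bar> \<le> norm h" "\<And>x h k. \<bar>H x h k\<bar> \<le> 2 * norm h * norm k"
proof -
  interpret prob_space \<Omega> by (rule \<Omega>)
  define L where "L x \<omega> = gibbs_family.log_partition (K \<omega>) (F \<omega>) \<phi> x" for x \<omega>
  define G where "G x h \<omega> = gibbs_family.gibbs_mean (K \<omega>) (F \<omega>) \<phi> x (\<lambda>u. h \<bullet> \<phi> u)" for x h \<omega>
  define H where "H x h k \<omega> = gibbs_family.gibbs_cov (K \<omega>) (F \<omega>) \<phi> x h k" for x h k \<omega>
  have annealed_eq: "(\<lambda>x. (\<integral>\<omega>. ln (\<integral>u. F \<omega> u * exp (x \<bullet> \<phi> u) \<partial>K \<omega>) \<partial>\<Omega>) + c)
      = (\<lambda>x. (\<integral>\<omega>. L x \<omega> \<partial>\<Omega>) + c)"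
    unfolding L_def by (simp add: log_partition_kernel_eq cong: Bochner_Integration.integral_cong)
  have G_le: "\<bar>G x h \<omega>\<bar> \<le> 1 * norm h" and H_le: "\<bar>H x h k \<omega>\<bar> \<le> 2 * norm h * norm k"
    if "\<omega> \<in> space \<Omega>" for x h k \<omega>
    using gibbs_family.abs_gibbs_mean_inner_le[OF gibbs_family_kernel[OF that]]
      gibbs_family.abs_gibbs_cov_le[OF gibbs_family_kernel[OF that]]
    by (simp_all add: G_def H_def)
  have "(\<lambda>u. h \<bullet> \<phi> u) \<in> borel_measurable U" for h using \<phi>_measurable by measurable
  then have measurable: "L x \<in> borel_measurable \<Omega>" "G x h \<in> borel_measurable \<Omega>" "H x h k \<in> borel_measurable \<Omega>"
    for x h k
    unfolding L_def[abs_def] G_def[abs_def] H_def[abs_def]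
    by (simp_all add: measurable_log_partition_kernel measurable_gibbs_mean_kernel measurable_gibbs_cov_kernel)
  show ?thesis
  proof (cases "integrable \<Omega> (L 0)")
    case True
    then have "integrable \<Omega> (L x)" for x
      unfolding L_def[abs_def] by (rule integrable_log_partition_kernel_transfer)
    then have "second_order_expansion (1/4) 10 (\<lambda>x. (\<integral>\<omega>. L x \<omega> \<partial>\<Omega>) + c)
        (\<lambda>x h. \<integral>\<omega>. G x h \<omega> \<partial>\<Omega>) (\<lambda>x h k. \<integral>\<omega>. H x h k \<omega> \<partial>\<Omega>)"
      using gibbs_family.log_partition_second_order_expansion[OF gibbs_family_kernel]
      by (intro second_order_expansion_integral[OF \<Omega> measurable _ _ G_le H_le])
         (simp_all add: L_def G_def H_def)
    moreover have "\<bar>\<integral>\<omega>. G x h \<omega> \<partial>\<Omega>\<bar> \<le> norm h" "\<bar>\<integral>\<omega>. H x h k \<omega> \<partial>\<Omega>\<bar> \<le> 2 * norm h * norm k"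
      for x h k
      using G_le H_le measurable by (auto intro!: abs_integral_le_const)
    ultimately show ?thesis using that unfolding annealed_eq by blast
  next
    case False
    then have "\<not> integrable \<Omega> (L x)" for x
      unfolding L_def[abs_def] using integrable_log_partition_kernel_transfer by blast
    then have "second_order_expansion (1/4) 10 (\<lambda>x. (\<integral>\<omega>. L x \<omega> \<partial>\<Omega>) + c) (\<lambda>_ _. 0) (\<lambda>_ _ _. 0)"
      by (simp add: not_integrable_integral_eq second_order_expansion_const)
    then show ?thesis using that unfolding annealed_eq by simp
  qed
qed

end

lemma norm_outer: "norm (outer u v :: 'd::finite mat) = norm u * norm v"
proof -
  have "outer u v = (\<chi> i. u $ i *\<^sub>R v)" by (simp add: outer_def vec_eq_iff)
  then have "norm (outer u v) = L2_set (\<lambda>i. norm (u $ i *\<^sub>R v)) UNIV"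
    by (simp only: norm_vec_def vec_lambda_beta)
  also have "\<dots> = L2_set (\<lambda>i. \<bar>u $ i\<bar>) UNIV * norm v"
    by (simp add: L2_set_left_distrib)
  also have "\<dots> = norm u * norm v" by (simp add: norm_vec_def)
  finally show ?thesis .
qed

lemma borel_measurable_outer_self [measurable]: "(\<lambda>t. outer t t :: 'd::finite mat) \<in> borel_measurable borel"
  unfolding outer_def by (intro borel_measurable_continuous_onI continuous_on_vec_lambda continuous_intros)

lemma AE_norm_outer_self_le:
  fixes P :: "(real ^ 'd::finite) measure"
  assumes P: "prob_space P" "sets P = sets borel" "emeasure P (cball 0 1) = 1" and Q: "prob_space Q"
  shows "AE u in P \<Otimes>\<^sub>M Q. norm (outer (fst u) (fst u)) \<le> 1"
proof -
  interpret P1: prob_space P by (rule P(1))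
  interpret Q1: prob_space Q by (rule Q)
  interpret PQ: pair_prob_space P Q ..
  have "AE t in P. t \<in> cball 0 1"
    using P(2,3) by (intro P1.AE_in_set_eq_1[THEN iffD2]) (simp_all add: P1.emeasure_eq_measure)
  then have "AE t in P. AE a in Q. norm (outer t t) \<le> 1"
    by eventually_elim (simp add: norm_outer mult_le_one)
  moreover have [measurable]: "(\<lambda>t. outer t t) \<in> borel_measurable P"
    using P(2) by (simp cong: measurable_cong_sets)
  ultimately show ?thesis by (intro PQ.AE_pair_measure) simp_all
qed

lemma borel_measurable_Pfun_weight:
  fixes P1 :: "(real ^ 'd::finite) measure" and w :: "'w \<Rightarrow> 'e \<Rightarrow> 'h::{real_inner,polish_space} \<Rightarrow> real ^ 'd"
  assumes P1: "sets P1 = sets borel"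
    and w: "(\<lambda>((\<omega>, \<eta>), a). w \<omega> \<eta> a) \<in> borel_measurable (\<Omega> \<Otimes>\<^sub>M borel)"
  shows "(\<lambda>(\<omega>\<eta>, u). exp (w (fst \<omega>\<eta>) (snd \<omega>\<eta>) (snd u) \<bullet> fst u - 1/2 * (A \<bullet> outer (fst u) (fst u))))
    \<in> borel_measurable (\<Omega> \<Otimes>\<^sub>M (P1 \<Otimes>\<^sub>M borel))"
proof -
  have sets_U: "sets (P1 \<Otimes>\<^sub>M (borel :: 'h measure)) = sets (borel \<Otimes>\<^sub>M borel)"
    by (rule sets_pair_measure_cong[OF P1 refl])
  have "(\<lambda>z. (fst z, snd (snd z))) \<in> \<Omega> \<Otimes>\<^sub>M (borel \<Otimes>\<^sub>M (borel :: 'h measure)) \<rightarrow>\<^sub>M \<Omega> \<Otimes>\<^sub>M borel"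
    by measurable
  from measurable_compose[OF this w]
  have [measurable]: "(\<lambda>z. w (fst (fst z)) (snd (fst z)) (snd (snd z)))
      \<in> borel_measurable (\<Omega> \<Otimes>\<^sub>M (borel \<Otimes>\<^sub>M (borel :: 'h measure)))"
    by (simp add: case_prod_beta)
  show ?thesis
    unfolding case_prod_beta by (simp cong: measurable_cong_sets[OF sets_pair_measure_cong[OF refl sets_U] refl]) measurable
qed

lemma Pfun_second_order_expansion:
  fixes M :: "'w measure" and N :: "'e measure" and R :: "'w \<Rightarrow> 'h::{real_inner,polish_space} measure"
    and P1 :: "(real ^ 'd::finite) measure" and w :: "'w \<Rightarrow> 'e \<Rightarrow> 'h \<Rightarrow> real ^ 'd"
  assumes P1: "prob_space P1" "sets P1 = sets borel" "emeasure P1 (cball 0 1) = 1"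
    and M: "prob_space M" and R: "R \<in> M \<rightarrow>\<^sub>M prob_algebra borel" and N: "prob_space N"
    and w: "(\<lambda>((\<omega>, \<eta>), a). w \<omega> \<eta> a) \<in> borel_measurable ((M \<Otimes>\<^sub>M N) \<Otimes>\<^sub>M borel)"
  obtains G H where "second_order_expansion (1/4) 10 (Pfun M N R w P1 \<xi> g \<pi>) G H"
    "\<And>x h. \<bar>G x h\<bar> \<le> norm h" "\<And>x h k. \<bar>H x h k\<bar> \<le> 2 * norm h * norm k"
proof -
  define F where "F \<omega>\<eta> u = exp (w (fst \<omega>\<eta>) (snd \<omega>\<eta>) (snd u) \<bullet> fst u - 1/2 * (g (\<pi> 1) \<bullet> outer (fst u) (fst u)))"
    for \<omega>\<eta> :: "'w \<times> 'e" and u :: "(real ^ 'd) \<times> 'h"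
  have sets_U: "sets (P1 \<Otimes>\<^sub>M (borel :: 'h measure)) = sets (borel \<Otimes>\<^sub>M borel)"
    by (rule sets_pair_measure_cong[OF P1(2) refl])
  have "P1 \<in> space (prob_algebra P1)" using P1(1) by (simp add: space_prob_algebra)
  then have K: "(\<lambda>\<omega>\<eta>. P1 \<Otimes>\<^sub>M R (fst \<omega>\<eta>)) \<in> M \<Otimes>\<^sub>M N \<rightarrow>\<^sub>M prob_algebra (P1 \<Otimes>\<^sub>M borel)"
    by (intro measurable_pair_prob measurable_const measurable_compose[OF measurable_fst R])
  have F_measurable: "(\<lambda>(\<omega>\<eta>, u). F \<omega>\<eta> u) \<in> borel_measurable ((M \<Otimes>\<^sub>M N) \<Otimes>\<^sub>M (P1 \<Otimes>\<^sub>M borel))"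
    unfolding F_def by (rule borel_measurable_Pfun_weight[OF P1(2) w])
  have \<phi>_measurable: "(\<lambda>u. outer (fst u) (fst u)) \<in> borel_measurable (P1 \<Otimes>\<^sub>M (borel :: 'h measure))"
    by (simp cong: measurable_cong_sets[OF sets_U refl])
  have norm_\<phi>_le: "AE u in P1 \<Otimes>\<^sub>M R (fst \<omega>\<eta>). norm (outer (fst u) (fst u)) \<le> 1"
    if "\<omega>\<eta> \<in> space (M \<Otimes>\<^sub>M N)" for \<omega>\<eta>
    using measurable_space[OF R, of "fst \<omega>\<eta>"] that
    by (intro AE_norm_outer_self_le[OF P1]) (auto simp: space_pair_measure space_prob_algebra)
  have F_pos: "0 < F \<omega>\<eta> u" for \<omega>\<eta> u by (simp add: F_def)
  define c where "c = 1/2 * (\<integral>s. indicator {0..1} s * theta \<xi> g (\<pi> s) \<partial>lborel)"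
  have Pfun_eq: "Pfun M N R w P1 \<xi> g \<pi> = (\<lambda>x.
      (\<integral>\<omega>\<eta>. ln (\<integral>u. F \<omega>\<eta> u * exp (x \<bullet> outer (fst u) (fst u)) \<partial>(P1 \<Otimes>\<^sub>M R (fst \<omega>\<eta>))) \<partial>(M \<Otimes>\<^sub>M N)) + c)"
    by (simp add: fun_eq_iff Pfun_def F_def c_def exp_add)
  obtain G H where "second_order_expansion (1/4) 10 (\<lambda>x.
      (\<integral>\<omega>\<eta>. ln (\<integral>u. F \<omega>\<eta> u * exp (x \<bullet> outer (fst u) (fst u)) \<partial>(P1 \<Otimes>\<^sub>M R (fst \<omega>\<eta>))) \<partial>(M \<Otimes>\<^sub>M N)) + c) G H"
    "\<And>x h. \<bar>G x h\<bar> \<le> norm h" "\<And>x h k. \<bar>H x h k\<bar> \<le> 2 * norm h * norm k"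
    using annealed_log_partition_second_order_expansion
        [OF prob_space_pair[OF M N] K F_measurable F_pos \<phi>_measurable norm_\<phi>_le, where c=c] by blast
  then show thesis by (rule that[unfolded Pfun_eq])
qed

theorem lemma2p2:
  fixes M :: "'w measure" and N :: "'e measure"
    and R :: "'w \<Rightarrow> 'h::{real_inner,polish_space} measure"
    and P1 :: "(real ^ 'd::finite) measure"
    and \<xi> :: "'d mat \<Rightarrow> real" and g :: "'d mat \<Rightarrow> 'd mat"
    and w :: "(real \<Rightarrow> 'd mat) \<Rightarrow> 'w \<Rightarrow> 'e \<Rightarrow> 'h \<Rightarrow> real ^ 'd"
  assumes P1: "prob_space P1" "sets P1 = sets borel" "emeasure P1 (cball 0 1) = 1"
    and xi: "xi_assm \<xi> g"
    and RPC: "is_RPC M R"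
    and N: "prob_space N"
    and w: "\<And>\<pi>. \<pi> \<in> Pi_paths \<Longrightarrow> cond_gauss_proc M N R (g \<circ> \<pi>) (w \<pi>)"
  shows "\<forall>\<pi>\<in>Pi_paths.
           twice_differentiable_on (Pfun M N R (w \<pi>) P1 \<xi> g \<pi>) {x. symm x} \<and>
           (\<forall>x y. symm x \<longrightarrow> symm y \<longrightarrow> norm y \<le> 1 \<longrightarrow>
              \<bar>deriv (\<lambda>r. Pfun M N R (w \<pi>) P1 \<xi> g \<pi> (x + r *\<^sub>R y)) 0\<bar>
              + \<bar>deriv (\<lambda>r. deriv (\<lambda>s. Pfun M N R (w \<pi>) P1 \<xi> g \<pi> (x + s *\<^sub>R y)) r) 0\<bar> \<le> 3)"
proof
  fix \<pi> :: "real \<Rightarrow> 'd mat" assume "\<pi> \<in> Pi_paths"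
  from RPC have "prob_space M" "R \<in> M \<rightarrow>\<^sub>M prob_algebra borel" by (auto simp: is_RPC_def)
  moreover have "(\<lambda>((\<omega>, \<eta>), a). w \<pi> \<omega> \<eta> a) \<in> borel_measurable ((M \<Otimes>\<^sub>M N) \<Otimes>\<^sub>M borel)"
    using w[OF \<open>\<pi> \<in> Pi_paths\<close>] by (simp add: cond_gauss_proc_def)
  ultimately obtain G H where expansion: "second_order_expansion (1/4) 10 (Pfun M N R (w \<pi>) P1 \<xi> g \<pi>) G H"
    and G_le: "\<And>x h. \<bar>G x h\<bar> \<le> norm h" and H_le: "\<And>x h k. \<bar>H x h k\<bar> \<le> 2 * norm h * norm k"
    using Pfun_second_order_expansion[OF P1 _ _ N] by blast
  have "\<bar>G x y\<bar> + \<bar>H x y y\<bar> \<le> 3" if "norm y \<le> 1" for x y :: "'d mat"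
  proof -
    have "norm y * norm y \<le> 1" using that by (simp add: mult_le_one)
    then show ?thesis using G_le[of x y] H_le[of x y y] that by linarith
  qed
  moreover have "(0::real) < 1/4" by simp
  ultimately show "twice_differentiable_on (Pfun M N R (w \<pi>) P1 \<xi> g \<pi>) {x. symm x} \<and>
      (\<forall>x y. symm x \<longrightarrow> symm y \<longrightarrow> norm y \<le> 1 \<longrightarrow>
         \<bar>deriv (\<lambda>r. Pfun M N R (w \<pi>) P1 \<xi> g \<pi> (x + r *\<^sub>R y)) 0\<bar>
         + \<bar>deriv (\<lambda>r. deriv (\<lambda>s. Pfun M N R (w \<pi>) P1 \<xi> g \<pi> (x + s *\<^sub>R y)) r) 0\<bar> \<le> 3)"
    using second_order_expansion_twice_differentiable[OF expansion] second_order_expansion_deriv_line[OF expansion]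
      second_order_expansion_deriv2_line[OF expansion]
    by simp
qed

end
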